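(* Let $A$ be a $\boldsymbol{\mathit{ba}\ell}$-algebra, $a\in A$ and $s\in\mathbb R$ with $a+s\ge0$. Then the set $\{rx_{\lnot I}\mid r\in\mathbb R,\ I\in{\sf Arch}(A),\ (a+s-r)^-\in I\}$ is bounded above in $D(\mathbb R[B])$ (by $\|a\|+s+1$), so its join exists there, and the element $$-s+\bigvee\{rx_{\lnot I}\mid r\in\mathbb R,\ I\in{\sf Arch}(A),\ (a+s-r)^-\in I\}$$ does not depend on the choice of $s$ with $a+s\ge 0$. Hence $\alpha:A\to D(\mathbb R[B])$ given by this formula is a well-defined map.
   Context: A $\boldsymbol{\mathit{ba}\ell}$-algebra is a commutative unital lattice-ordered algebra $A$ over $\mathbb R$ that is bounded (for every $a\in A$ there is an integer $n\ge1$ with $a\le n\cdot1$) and archimedean (if $na\le b$ for all $n\ge1$ then $a\le0$); reals $r$ are identified with $r\cdot1$. For $a\in A$: $a^+=a\vee0$, $a^-=(-a)\vee0$, $|a|=a\vee(-a)$, $\|a\|=\inf\{r\in\mathbb R\mid |a|\le r\}$. An $\ell$-ideal is a ring ideal $I$ with $|a|\le|b|$, $b\in I\Rightarrow a\in I$; it is archimedean if $A/I$ is archimedean. ${\sf Arch}(A)$ is the set of archimedean $\ell$-ideals ordered by inclusion; it is a bounded distributive lattice (indeed a frame) with meet $\cap$ and with join $I\vee J$ the least archimedean $\ell$-ideal containing $I\cup J$. $B$ is the free boolean extension of the bounded distributive lattice ${\sf Arch}(A)$ (a boolean algebra generated by ${\sf Arch}(A)$ as a bounded sublattice, such that every bounded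 lattice homomorphism from ${\sf Arch}(A)$ to a boolean algebra extends uniquely to a boolean homomorphism); ${\sf Arch}(A)\subseteq B$ and $\lnot$ denotes complement in $B$. For a boolean algebra $B$, $\mathbb R[B]$ is the quotient of the polynomial ring $\mathbb R[x_e\mid e\in B]$ by the ideal generated by $x_{e\wedge f}-x_ex_f$, $x_{e\vee f}-(x_e+x_f-x_ex_f)$, $x_{\lnot e}-(1-x_e)$, $x_0$ ($e,f\in B$); it is a $\boldsymbol{\mathit{ba}\ell}$-algebra and $e\mapsto x_e$ is a boolean isomorphism onto its idempotents. $D(\mathbb R[B])$ is its Dedekind completion: the (unique up to isomorphism) Dedekind complete $\boldsymbol{\mathit{ba}\ell}$-algebra containing $\mathbb R[B]$ as a $\boldsymbol{\mathit{ba}\ell}$-subalgebra such that each of its elements is a join of elements of $\mathbb R[B]$. *)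

theory Defs
  imports Complex_Main
begin

text \<open>A ba-l-algebra: a commutative unital lattice-ordered real algebra which is
  bounded (every element is below some n*1, n >= 1) and archimedean.
  Reals r are identified with of_real r = r *R 1.\<close>

class bal_algebra = comm_ring_1 + real_algebra_1 + lattice + ordered_ab_group_add +
  assumes bal_mult_nonneg: "0 \<le> a \<Longrightarrow> 0 \<le> b \<Longrightarrow> 0 \<le> a * b"
  and bal_scaleR_nonneg: "0 \<le> r \<Longrightarrow> 0 \<le> a \<Longrightarrow> 0 \<le> r *\<^sub>R a"
  and bal_bounded: "\<exists>n::nat. 1 \<le> n \<and> a \<le> of_nat n"
  and bal_archimedean: "(\<And>n::nat. 1 \<le> n \<Longrightarrow> of_nat n * a \<le> b) \<Longrightarrow> a \<le> 0"

definition pospart :: "'a::bal_algebra \<Rightarrow> 'a" where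
  "pospart a = sup a 0"

definition negpart :: "'a::bal_algebra \<Rightarrow> 'a" where
  "negpart a = sup (- a) 0"

definition labs :: "'a::bal_algebra \<Rightarrow> 'a" where
  "labs a = sup a (- a)"

definition bnorm :: "'a::bal_algebra \<Rightarrow> real" where
  "bnorm a = Inf {r::real. labs a \<le> of_real r}"

definition l_ideal :: "'a::bal_algebra set \<Rightarrow> bool" where
  "l_ideal I \<longleftrightarrow> 0 \<in> I \<and> (\<forall>u\<in>I. \<forall>v\<in>I. u + v \<in> I) \<and> (\<forall>u\<in>I. - u \<in> I)
     \<and> (\<forall>u\<in>I. \<forall>c. c * u \<in> I)
     \<and> (\<forall>u v. labs u \<le> labs v \<longrightarrow> v \<in> I \<longrightarrow> u \<in> I)"

text \<open>A/I is archimedean, written out: in A/I one has [u] <= [v] iff (u - v)^+ in I,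
  so "n[u] <= [v] for all n >= 1 implies [u] <= 0" reads as follows.\<close>
definition arch_ideal :: "'a::bal_algebra set \<Rightarrow> bool" where
  "arch_ideal I \<longleftrightarrow> l_ideal I \<and>
     (\<forall>u v. (\<forall>n::nat. 1 \<le> n \<longrightarrow> pospart (of_nat n * u - v) \<in> I) \<longrightarrow> pospart u \<in> I)"

definition Arch :: "'a::bal_algebra set set" where
  "Arch = {I. arch_ideal I}"

definition arch_join :: "'a::bal_algebra set \<Rightarrow> 'a set \<Rightarrow> 'a set" where
  "arch_join I J = \<Inter> {K \<in> Arch. I \<union> J \<subseteq> K}"

text \<open>e identifies Arch(A) with a bounded sublattice of the boolean algebra 'b
  which generates 'b as a boolean algebra.\<close>
definition free_boolean_extension :: "('a::bal_algebra set \<Rightarrow> 'b::boolean_algebra) \<Rightarrow> bool" where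
  "free_boolean_extension e \<longleftrightarrow>
     inj_on e Arch
     \<and> (\<forall>I\<in>Arch. \<forall>J\<in>Arch. e (I \<inter> J) = inf (e I) (e J))
     \<and> (\<forall>I\<in>Arch. \<forall>J\<in>Arch. e (arch_join I J) = sup (e I) (e J))
     \<and> e {0} = bot \<and> e UNIV = top
     \<and> (\<forall>S::'b set. e ` Arch \<subseteq> S \<and> bot \<in> S \<and> top \<in> S
          \<and> (\<forall>u\<in>S. \<forall>v\<in>S. inf u v \<in> S \<and> sup u v \<in> S) \<and> (\<forall>u\<in>S. - u \<in> S)
          \<longrightarrow> S = UNIV)"

text \<open>Elements of R[B], realised inside D via x: finite real combinations of the x_e.\<close>
definition RB_elems :: "('b \<Rightarrow> 'd::bal_algebra) \<Rightarrow> 'd set" where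
  "RB_elems x = {y. \<exists>F c. finite F \<and> y = (\<Sum>f\<in>F. c f *\<^sub>R x f)}"

text \<open>x : B -> D is injective and satisfies the defining relations of R[B]
  (so it induces an embedding of R[B] into D, whose image is RB_elems x, a
  sublattice), and every element of the Dedekind complete ba-l-algebra D is a
  join of elements of R[B].\<close>
definition dedekind_completion_RB ::
  "('b::boolean_algebra \<Rightarrow> 'd::{bal_algebra, conditionally_complete_lattice}) \<Rightarrow> bool" where
  "dedekind_completion_RB x \<longleftrightarrow>
     inj x
     \<and> (\<forall>u v. x (inf u v) = x u * x v)
     \<and> (\<forall>u v. x (sup u v) = x u + x v - x u * x v)
     \<and> (\<forall>u. x (- u) = 1 - x u)
     \<and> x bot = 0
     \<and> (\<forall>u\<in>RB_elems x. \<forall>v\<in>RB_elems x. sup u v \<in> RB_elems x \<and> inf u v \<in> RB_elems x)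
     \<and> (\<forall>d. \<exists>S. S \<subseteq> RB_elems x \<and> S \<noteq> {} \<and> bdd_above S \<and> d = Sup S)"

definition alpha_set :: "('a::bal_algebra set \<Rightarrow> 'b::boolean_algebra) \<Rightarrow> ('b \<Rightarrow> 'd::bal_algebra)
    \<Rightarrow> 'a \<Rightarrow> real \<Rightarrow> 'd set" where
  "alpha_set e x a s = {r *\<^sub>R x (- e I) | r I. I \<in> Arch \<and> negpart (a + of_real s - of_real r) \<in> I}"

end

theory Submission
  imports Defs "HOL-Library.Lattice_Algebras"
begin

(*
  Idempotents p of a bal-algebra satisfy 0 <= p <= 1 and inf p (1 - p) = 0, because in a
  bounded archimedean l-algebra disjoint positive elements have zero product, so squares
  are positive.  Every element r x(not I) of the set is bounded by ||a|| + s + 1: if r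
  exceeds this bound then (a + s - r)^- >= 1, so I = A and x(not A) = 0.
  Replacing s by s + d (d >= 0) turns the admissible coefficient r into r + d.  Hence every
  element of the new set is at most d plus an element of the old one, as d x(not I) <= d;
  conversely r x(not I) + d <= sup d ((r + d) x(not I)), because x(not I) and 1 - x(not I)
  are disjoint, and both d = d x(not {0}) and (r + d) x(not I) lie in the new set.  So the
  two joins differ by exactly d.
*)

instance bal_algebra \<subseteq> ordered_comm_ring
proof
  fix a b c :: 'a
  assume "a \<le> b" "0 \<le> c"
  then show "c * a \<le> c * b"
    using bal_mult_nonneg[of c "b - a"] by (simp add: right_diff_distrib)
qed

instance bal_algebra \<subseteq> ordered_real_vector
proof
  fix x y :: 'a and a :: real
  assume "x \<le> y" "0 \<le> a"
  then show "a *\<^sub>R x \<le> a *\<^sub>R y"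
    using bal_scaleR_nonneg[of a "y - x"] by (simp add: scaleR_diff_right)
next
  fix a b :: real and x :: 'a
  assume "a \<le> b" "0 \<le> x"
  then show "a *\<^sub>R x \<le> b *\<^sub>R x"
    using bal_scaleR_nonneg[of "b - a" x] by (simp add: scaleR_diff_left)
qed

lemma bal_zero_le_one: "0 \<le> (1 :: 'a::bal_algebra)"
proof -
  obtain n :: nat where n: "1 \<le> n" "0 \<le> (of_nat n :: 'a)" using bal_bounded[of 0] by blast
  have "0 \<le> (1 / real n) *\<^sub>R (of_nat n :: 'a)"
    using n(2) by (rule scaleR_nonneg_nonneg[rotated]) simp
  also have "(1 / real n) *\<^sub>R (of_nat n :: 'a) = of_real (1 / real n * real n)"
    by (simp only: scaleR_conv_of_real of_real_mult of_real_of_nat_eq)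
  also have "\<dots> = 1" using n(1) by simp
  finally show ?thesis .
qed

instance bal_algebra \<subseteq> ordered_semiring_1
  by standard (simp add: order_less_le bal_zero_le_one)

instance bal_algebra \<subseteq> lattice_ab_group_add ..

lemma bal_of_real_mono: "r \<le> r' \<Longrightarrow> of_real r \<le> (of_real r' :: 'a::bal_algebra)"
  unfolding of_real_def by (simp add: scaleR_right_mono)

lemma bal_of_real_le_iff: "of_real r \<le> (of_real r' :: 'a::bal_algebra) \<longleftrightarrow> r \<le> r'"
  by (metis bal_of_real_mono of_real_eq_iff order_antisym nle_le)

lemma disjoint_add:
  fixes a b c :: "'a::bal_algebra"
  assumes "0 \<le> a" "0 \<le> b" "0 \<le> c" "inf a c = 0" "inf b c = 0"
  shows "inf (a + b) c = 0"
proof -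
  have "inf (a + b) c \<le> inf (a + b) (c + b)" using assms by (simp add: le_infI2)
  also have "\<dots> = b" using assms add_inf_distrib_right[of a c b] by simp
  finally have "inf (a + b) c \<le> inf b c" by simp
  thus ?thesis using assms by (simp add: antisym)
qed

lemma disjoint_of_nat_mult:
  fixes a b :: "'a::bal_algebra"
  assumes "0 \<le> a" "0 \<le> b" "inf a b = 0"
  shows "inf (of_nat n * a) b = 0"
proof (induction n)
  case (Suc n)
  have "0 \<le> of_nat n * a" using assms by simp
  thus ?case using disjoint_add[OF _ assms(1,2) Suc assms(3)] by (simp add: algebra_simps)
qed (simp add: inf_absorb1 assms)

lemma disjoint_mult:
  fixes a b c :: "'a::bal_algebra"
  assumes "0 \<le> c" "0 \<le> a" "0 \<le> b" "inf a b = 0"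
  shows "inf (c * a) b = 0"
proof -
  obtain n :: nat where "c \<le> of_nat n" using bal_bounded[of c] by blast
  hence "inf (c * a) b \<le> inf (of_nat n * a) b"
    using assms(2) by (intro inf_mono mult_right_mono) simp_all
  thus ?thesis
    using disjoint_of_nat_mult[OF assms(2-4)] assms(1,2,3) by (simp add: antisym)
qed

lemma disjoint_mult_eq_0:
  fixes a b :: "'a::bal_algebra"
  assumes "0 \<le> a" "0 \<le> b" "inf a b = 0"
  shows "a * b = 0"
proof -
  have "inf b (b * a) = 0"
    using disjoint_mult[OF assms(2) assms] by (simp add: inf_commute)
  hence "inf (a * b) (b * a) = 0"
    using disjoint_mult[OF assms(1) assms(2)] assms by simp
  thus ?thesis by (simp add: mult.commute)
qed

lemma square_nonneg: "0 \<le> (a :: 'a::bal_algebra) * a"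
proof -
  define u v where "u = pprt a" and "v = - nprt a"
  have a: "a = u - v" using prts[of a] by (simp add: u_def v_def)
  have u0: "0 \<le> u" and v0: "0 \<le> v" by (simp_all add: u_def v_def)
  have "inf u v = inf (u - v) 0 + v"
    by (simp add: add_inf_distrib_right)
  also have "\<dots> = nprt a + v" by (simp add: a nprt_def)
  also have "\<dots> = 0" by (simp add: v_def)
  finally have "u * v = 0" by (rule disjoint_mult_eq_0[OF u0 v0])
  hence "a * a = u * u + v * v" by (simp add: a algebra_simps)
  thus ?thesis using u0 v0 by simp
qed

lemma idempotent_nonneg:
  fixes p :: "'a::bal_algebra"
  assumes "p * p = p"
  shows "0 \<le> p"
  using square_nonneg[of p] assms by simp

lemma idempotent_le_one:
  fixes p :: "'a::bal_algebra"
  assumes "p * p = p"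
  shows "p \<le> 1"
proof -
  have "(1 - p) * (1 - p) = 1 - p" using assms by (simp add: algebra_simps)
  thus ?thesis using idempotent_nonneg by fastforce
qed

lemma idempotent_disjoint_complement:
  fixes p :: "'a::bal_algebra"
  assumes "p * p = p"
  shows "inf p (1 - p) = 0"
proof -
  define q z where "q = 1 - p" and "z = inf p q"
  have "0 \<le> p" "0 \<le> q" "p * q = 0"
    using assms idempotent_nonneg idempotent_le_one by (auto simp: q_def z_def algebra_simps)
  have "z = z * (p + q)" by (simp add: q_def z_def)
  also have "\<dots> = p * z + q * z" by (simp add: algebra_simps)
  also have "\<dots> \<le> p * q + q * p"
    using \<open>0 \<le> p\<close> \<open>0 \<le> q\<close> by (intro add_mono mult_left_mono) (simp_all add: q_def z_def)
  also have "\<dots> = 0" using \<open>p * q = 0\<close> by (simp add: mult.commute)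
  finally show ?thesis using \<open>0 \<le> p\<close> \<open>0 \<le> q\<close> by (simp add: q_def z_def antisym)
qed

lemma scaleR_inf:
  fixes p q :: "'a::{ordered_real_vector, lattice}"
  assumes "0 \<le> m"
  shows "m *\<^sub>R inf p q = inf (m *\<^sub>R p) (m *\<^sub>R q)"
proof (cases "m = 0")
  case False
  with assms have m: "0 < m" by simp
  have "(1 / m) *\<^sub>R inf (m *\<^sub>R p) (m *\<^sub>R q) \<le> (1 / m) *\<^sub>R (m *\<^sub>R p)"
    and "(1 / m) *\<^sub>R inf (m *\<^sub>R p) (m *\<^sub>R q) \<le> (1 / m) *\<^sub>R (m *\<^sub>R q)"
    using m by (intro scaleR_left_mono; simp)+
  hence "(1 / m) *\<^sub>R inf (m *\<^sub>R p) (m *\<^sub>R q) \<le> inf p q"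
    using m by simp
  hence "inf (m *\<^sub>R p) (m *\<^sub>R q) \<le> m *\<^sub>R inf p q"
    using m scaleR_left_mono[of _ "inf p q" m] by fastforce
  moreover have "m *\<^sub>R inf p q \<le> inf (m *\<^sub>R p) (m *\<^sub>R q)"
    using assms by (simp add: scaleR_left_mono)
  ultimately show ?thesis by (rule antisym[rotated])
qed simp

lemma labs_nonneg: "0 \<le> labs (u :: 'a::bal_algebra)"
proof -
  have "0 \<le> labs u + labs u"
    using add_mono[OF sup_ge1[of u "- u"] sup_ge2[of "- u" u]] by (simp add: labs_def sup_commute)
  thus ?thesis by (simp only: zero_le_double_add_iff_zero_le_single_add)
qed

lemma labs_of_nonneg: "0 \<le> (u :: 'a::bal_algebra) \<Longrightarrow> labs u = u"
  by (simp add: labs_def sup_absorb1 minus_le_self_iff)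

lemma le_of_real_if_le_of_real_add:
  fixes u :: "'a::bal_algebra"
  assumes "\<And>\<epsilon>. 0 < \<epsilon> \<Longrightarrow> u \<le> of_real (b + \<epsilon>)"
  shows "u \<le> of_real b"
proof -
  have "u - of_real b \<le> 0"
  proof (rule bal_archimedean)
    fix n :: nat assume n: "1 \<le> n"
    have "u - of_real b \<le> of_real (1 / real n)"
      using assms[of "1 / real n"] n by (simp add: algebra_simps)
    hence "of_nat n * (u - of_real b) \<le> of_nat n * of_real (1 / real n)"
      by (rule mult_left_mono) simp
    also have "of_nat n * of_real (1 / real n) = (of_real (real n * (1 / real n)) :: 'a)"
      by (simp only: of_real_mult of_real_of_nat_eq)
    also have "\<dots> = 1" using n by simp
    finally show "of_nat n * (u - of_real b) \<le> 1" .
  qed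
  thus ?thesis by simp
qed

lemma labs_le_bnorm: "labs (a :: 'a::bal_algebra) \<le> of_real (bnorm a)"
proof -
  define S where "S = {r. labs a \<le> of_real r}"
  obtain n :: nat where "labs a \<le> of_nat n" using bal_bounded[of "labs a"] by blast
  hence "real n \<in> S" by (simp add: S_def)
  hence ne: "S \<noteq> {}" by blast
  have "bdd_below S"
  proof (rule bdd_belowI)
    fix r assume "r \<in> S"
    hence "of_real 0 \<le> (of_real r :: 'a)"
      using labs_nonneg[of a] unfolding S_def by (simp add: order_trans)
    thus "0 \<le> r" by (simp only: bal_of_real_le_iff)
  qed
  have "labs a \<le> of_real (Inf S)"
  proof (rule le_of_real_if_le_of_real_add)
    fix \<epsilon> :: real assume "0 < \<epsilon>"
    then obtain r where r: "r \<in> S" "r < Inf S + \<epsilon>"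
      using cInf_lessD[OF ne, of "Inf S + \<epsilon>"] by auto
    have "labs a \<le> of_real r" using r(1) by (simp add: S_def)
    also have "\<dots> \<le> of_real (Inf S + \<epsilon>)" using r(2) by (intro bal_of_real_mono) simp
    finally show "labs a \<le> of_real (Inf S + \<epsilon>)" .
  qed
  thus ?thesis by (simp only: S_def bnorm_def)
qed

lemma neg_le_bnorm:
  fixes a :: "'a::bal_algebra"
  assumes "0 \<le> a + of_real s"
  shows "- s \<le> bnorm a"
proof -
  have "of_real (- s) \<le> a" using add_right_mono[OF assms, of "- of_real s"] by simp
  also have "a \<le> labs a" by (simp add: labs_def)
  also have "\<dots> \<le> of_real (bnorm a)" by (rule labs_le_bnorm)
  finally show ?thesis by (simp only: bal_of_real_le_iff)
qed

lemma of_real_le_negpart: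
  fixes a :: "'a::bal_algebra"
  shows "of_real (r - bnorm a - s) \<le> negpart (a + of_real s - of_real r)"
proof -
  have "a \<le> of_real (bnorm a)" using labs_le_bnorm[of a] by (simp add: labs_def)
  hence "of_real (r - bnorm a - s) \<le> - (a + of_real s - of_real r)" by (simp add: algebra_simps)
  thus ?thesis by (simp add: negpart_def le_supI1)
qed

lemma l_ideal_eq_UNIV:
  fixes I :: "'a::bal_algebra set"
  assumes "l_ideal I" "v \<in> I" "1 \<le> v"
  shows "I = UNIV"
proof -
  have "labs 1 \<le> labs v"
    using assms(3) bal_zero_le_one[where 'a='a] by (simp add: labs_of_nonneg order_trans[of 0 1 v])
  hence "1 \<in> I" using assms(1,2) by (simp add: l_ideal_def)
  hence "c * 1 \<in> I" for c using assms(1) by (simp only: l_ideal_def)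
  thus ?thesis by auto
qed

lemma zero_in_Arch: "{0 :: 'a::bal_algebra} \<in> Arch"
proof -
  have "u = 0" if "labs u \<le> labs (0 :: 'a)" for u
  proof -
    have "labs u = 0" using that labs_nonneg[of u] by (simp add: labs_def antisym)
    thus ?thesis by (simp only: labs_def sup_0_eq_0)
  qed
  hence l: "l_ideal {0 :: 'a}" by (auto simp: l_ideal_def)
  show ?thesis unfolding Arch_def arch_ideal_def
  proof (intro CollectI conjI l allI impI)
    fix u v :: 'a
    assume h: "\<forall>n::nat. 1 \<le> n \<longrightarrow> pospart (of_nat n * u - v) \<in> {0}"
    have "u \<le> 0"
    proof (rule bal_archimedean)
      fix n :: nat assume "1 \<le> n"
      hence "sup (of_nat n * u - v) 0 = 0" using h by (simp add: pospart_def)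
      thus "of_nat n * u \<le> v" by (metis sup.orderI sup_ge1 diff_le_0_iff_le)
    qed
    thus "pospart u \<in> {0}" by (simp add: pospart_def sup_absorb2)
  qed
qed

lemma idempotent_scaleR_add_le_sup:
  fixes p :: "'a::bal_algebra"
  assumes "p * p = p" "0 \<le> d"
  shows "r *\<^sub>R p + of_real d \<le> sup (of_real d) ((r + d) *\<^sub>R p)"
proof (cases "r \<le> 0")
  case True
  hence "r *\<^sub>R p \<le> 0" using idempotent_nonneg[OF assms(1)] by (rule scaleR_nonpos_nonneg)
  hence "r *\<^sub>R p + of_real d \<le> of_real d" by simp
  thus ?thesis by (rule le_supI1)
next
  case False
  define m where "m = max r d"
  have "inf (r *\<^sub>R p) (d *\<^sub>R (1 - p)) \<le> inf (m *\<^sub>R p) (m *\<^sub>R (1 - p))"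
    using idempotent_nonneg[OF assms(1)] idempotent_le_one[OF assms(1)]
    by (intro inf_mono scaleR_right_mono) (simp_all add: m_def)
  also have "\<dots> = m *\<^sub>R inf p (1 - p)"
    using assms(2) by (simp add: m_def scaleR_inf)
  also have "\<dots> = 0" by (simp add: idempotent_disjoint_complement[OF assms(1)])
  finally have "inf (r *\<^sub>R p) (d *\<^sub>R (1 - p)) \<le> 0" .
  (* of_real d = d p + d (1 - p), so the difference below is the meet of the two components *)
  moreover have "r *\<^sub>R p + of_real d - sup (of_real d) ((r + d) *\<^sub>R p)
      = inf (r *\<^sub>R p) (d *\<^sub>R (1 - p))"
    by (simp add: diff_sup_eq_inf add_inf_distrib_left of_real_def scaleR_diff_right
        scaleR_add_left algebra_simps)
  ultimately have "r *\<^sub>R p + of_real d - sup (of_real d) ((r + d) *\<^sub>R p) \<le> 0"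
    by (simp only:)
  thus ?thesis by (simp only: diff_le_0_iff_le)
qed

lemma dedekind_completion_RB_idempotent:
  "dedekind_completion_RB x \<Longrightarrow> x u * x u = x u"
  unfolding dedekind_completion_RB_def by (metis inf.idem)

lemma dedekind_completion_RB_compl:
  "dedekind_completion_RB x \<Longrightarrow> x (- u) = 1 - x u"
  unfolding dedekind_completion_RB_def by blast

lemma dedekind_completion_RB_bot:
  "dedekind_completion_RB x \<Longrightarrow> x bot = 0"
  unfolding dedekind_completion_RB_def by blast

lemma dedekind_completion_RB_top:
  "dedekind_completion_RB x \<Longrightarrow> x top = 1"
  using dedekind_completion_RB_compl[of x bot] dedekind_completion_RB_bot[of x] by simp

lemma alpha_setI:
  "I \<in> Arch \<Longrightarrow> negpart (a + of_real s - of_real r) \<in> I \<Longrightarrow> r *\<^sub>R x (- e I) \<in> alpha_set e x a s"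
  by (auto simp: alpha_set_def)

lemma alpha_setE:
  assumes "y \<in> alpha_set e x a s"
  obtains r I where "y = r *\<^sub>R x (- e I)" "I \<in> Arch" "negpart (a + of_real s - of_real r) \<in> I"
  using assms by (auto simp: alpha_set_def)

lemma of_real_mem_alpha_set:
  assumes fe: "free_boolean_extension e" and dc: "dedekind_completion_RB x"
    and "of_real r \<le> a + of_real s"
  shows "of_real r \<in> alpha_set e x a s"
proof -
  have "negpart (a + of_real s - of_real r) = 0"
    using assms(3) by (simp add: negpart_def sup_absorb2)
  hence "r *\<^sub>R x (- e {0}) \<in> alpha_set e x a s"
    using zero_in_Arch by (intro alpha_setI) simp_all
  moreover have "x (- e {0}) = 1"
    using fe dedekind_completion_RB_top[OF dc] by (simp add: free_boolean_extension_def)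
  ultimately show ?thesis by (simp add: of_real_def)
qed

lemma alpha_set_ne:
  assumes "free_boolean_extension e" "dedekind_completion_RB x" "0 \<le> a + of_real s"
  shows "alpha_set e x a s \<noteq> {}"
  using of_real_mem_alpha_set[OF assms(1,2), of 0] assms(3) by auto

lemma alpha_set_le:
  fixes x :: "'b::boolean_algebra \<Rightarrow> 'd::{bal_algebra, conditionally_complete_lattice}"
  assumes fe: "free_boolean_extension e" and dc: "dedekind_completion_RB x"
    and as: "0 \<le> a + of_real s" and "y \<in> alpha_set e x a s"
  shows "y \<le> of_real (bnorm a + s + 1)"
proof -
  obtain r I where y: "y = r *\<^sub>R x (- e I)" and I: "I \<in> Arch"
    and ng: "negpart (a + of_real s - of_real r) \<in> I"
    using assms(4) by (rule alpha_setE)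
  define B where "B = bnorm a + s + 1"
  define p where "p = x (- e I)"
  have p: "0 \<le> p" "p \<le> 1"
    using dedekind_completion_RB_idempotent[OF dc]
    by (simp_all add: p_def idempotent_nonneg idempotent_le_one)
  have "0 \<le> B" using neg_le_bnorm[OF as] by (simp add: B_def)
  hence B: "0 \<le> (of_real B :: 'd)" using bal_of_real_mono[of 0 B] by simp
  consider "r \<le> 0" | "0 \<le> r" "r \<le> B" | "B < r" by linarith
  hence "r *\<^sub>R p \<le> of_real B"
  proof cases
    case 1
    hence "r *\<^sub>R p \<le> 0" using p(1) by (rule scaleR_nonpos_nonneg)
    from this B show ?thesis by (rule order_trans)
  next
    case 2
    have "r *\<^sub>R p \<le> r *\<^sub>R 1" using p(2) 2(1) by (rule scaleR_left_mono)
    also have "\<dots> = of_real r" by (simp add: of_real_def)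
    also have "\<dots> \<le> of_real B" using 2(2) by (rule bal_of_real_mono)
    finally show ?thesis .
  next
    case 3
    hence "1 \<le> r - bnorm a - s" by (simp add: B_def)
    hence "of_real 1 \<le> (of_real (r - bnorm a - s) :: 'a)" by (rule bal_of_real_mono)
    also have "\<dots> \<le> negpart (a + of_real s - of_real r)" by (rule of_real_le_negpart)
    finally have "I = UNIV"
      using I ng by (intro l_ideal_eq_UNIV) (auto simp: Arch_def arch_ideal_def)
    hence "p = 0"
      using fe dedekind_completion_RB_bot[OF dc] by (simp add: p_def free_boolean_extension_def)
    thus ?thesis using B by simp
  qed
  thus ?thesis by (simp add: y p_def B_def)
qed

lemma alpha_set_bdd_above:
  assumes "free_boolean_extension e" "dedekind_completion_RB x" "0 \<le> a + of_real s"
  shows "bdd_above (alpha_set e x a s)"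
  using alpha_set_le[OF assms] by (rule bdd_aboveI)

lemma Sup_alpha_set_add:
  fixes a :: "'a::bal_algebra"
    and e :: "'a set \<Rightarrow> 'b::boolean_algebra"
    and x :: "'b \<Rightarrow> 'd::{bal_algebra, conditionally_complete_lattice}"
  assumes fe: "free_boolean_extension e" and dc: "dedekind_completion_RB x"
    and as: "0 \<le> a + of_real s" and d: "0 \<le> d"
  shows "Sup (alpha_set e x a (s + d)) = of_real d + Sup (alpha_set e x a s)"
proof -
  define S T where "S = alpha_set e x a s" and "T = alpha_set e x a (s + d)"
  have "a + of_real (s + d) = (a + of_real s) + of_real d" by (simp add: algebra_simps)
  also have "0 \<le> \<dots>" using as bal_of_real_mono[OF d] by (intro add_nonneg_nonneg[of "a + of_real s"]) simp_all
  finally have asd: "0 \<le> a + of_real (s + d)" .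
  have S: "S \<noteq> {}" "bdd_above S"
    unfolding S_def using fe dc as by (rule alpha_set_ne, rule alpha_set_bdd_above)
  have T: "T \<noteq> {}" "bdd_above T"
    unfolding T_def using fe dc asd by (rule alpha_set_ne, rule alpha_set_bdd_above)
  have "Sup T \<le> of_real d + Sup S"
  proof (rule cSup_least[OF T(1)])
    fix y assume "y \<in> T"
    then obtain r I where y: "y = r *\<^sub>R x (- e I)" and I: "I \<in> Arch"
      and ng: "negpart (a + of_real (s + d) - of_real r) \<in> I"
      unfolding T_def by (rule alpha_setE)
    have eq: "a + of_real s - of_real (r - d) = a + of_real (s + d) - of_real r"
      by (simp add: algebra_simps)
    have "(r - d) *\<^sub>R x (- e I) \<in> S"
      unfolding S_def using I ng[folded eq] by (rule alpha_setI)
    hence "(r - d) *\<^sub>R x (- e I) \<le> Sup S" using S(2) by (rule cSup_upper)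
    moreover have "d *\<^sub>R x (- e I) \<le> d *\<^sub>R 1"
      using idempotent_le_one[OF dedekind_completion_RB_idempotent[OF dc]] d by (rule scaleR_left_mono)
    ultimately have "(r - d) *\<^sub>R x (- e I) + d *\<^sub>R x (- e I) \<le> Sup S + d *\<^sub>R 1"
      by (rule add_mono)
    thus "y \<le> of_real d + Sup S" by (simp add: y of_real_def scaleR_diff_left add.commute)
  qed
  moreover have "Sup S \<le> Sup T - of_real d"
  proof (rule cSup_least[OF S(1)])
    fix y assume "y \<in> S"
    then obtain r I where y: "y = r *\<^sub>R x (- e I)" and I: "I \<in> Arch"
      and ng: "negpart (a + of_real s - of_real r) \<in> I"
      unfolding S_def by (rule alpha_setE)
    have eq: "a + of_real (s + d) - of_real (r + d) = a + of_real s - of_real r"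
      by (simp add: algebra_simps)
    have "(r + d) *\<^sub>R x (- e I) \<in> T"
      unfolding T_def using I ng[folded eq] by (rule alpha_setI)
    moreover have "of_real d \<in> T"
      unfolding T_def using fe dc by (rule of_real_mem_alpha_set) (use as in simp)
    ultimately have "sup (of_real d) ((r + d) *\<^sub>R x (- e I)) \<le> Sup T"
      using T(2) by (simp add: cSup_upper)
    moreover have "y + of_real d \<le> sup (of_real d) ((r + d) *\<^sub>R x (- e I))"
      unfolding y using dedekind_completion_RB_idempotent[OF dc] d
      by (rule idempotent_scaleR_add_le_sup)
    ultimately have "y + of_real d \<le> Sup T" by (meson order_trans)
    thus "y \<le> Sup T - of_real d" by (simp add: le_diff_eq)
  qed
  ultimately show ?thesis by (simp add: S_def T_def algebra_simps antisym)
qed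

theorem mainTheorem5:
  fixes a :: "'a::bal_algebra"
    and e :: "'a set \<Rightarrow> 'b::boolean_algebra"
    and x :: "'b \<Rightarrow> 'd::{bal_algebra, conditionally_complete_lattice}"
  assumes "free_boolean_extension e"
    and "dedekind_completion_RB x"
  shows "(\<forall>s::real. 0 \<le> a + of_real s \<longrightarrow>
            alpha_set e x a s \<noteq> {} \<and> bdd_above (alpha_set e x a s)
            \<and> (\<forall>y\<in>alpha_set e x a s. y \<le> of_real (bnorm a + s + 1))
            \<and> (\<forall>y\<in>alpha_set e x a s. y \<le> Sup (alpha_set e x a s))
            \<and> (\<forall>u. (\<forall>y\<in>alpha_set e x a s. y \<le> u) \<longrightarrow> Sup (alpha_set e x a s) \<le> u))
       \<and> (\<forall>s t::real. 0 \<le> a + of_real s \<longrightarrow> 0 \<le> a + of_real t \<longrightarrow>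
            - of_real s + Sup (alpha_set e x a s) = - of_real t + Sup (alpha_set e x a t))"
proof (intro conjI allI impI ballI)
  fix s :: real assume as: "0 \<le> a + of_real s"
  note ne = alpha_set_ne[OF assms as] and bdd = alpha_set_bdd_above[OF assms as]
  show "alpha_set e x a s \<noteq> {}" "bdd_above (alpha_set e x a s)" by (fact ne, fact bdd)
  show "y \<le> of_real (bnorm a + s + 1)" if "y \<in> alpha_set e x a s" for y
    using assms as that by (rule alpha_set_le)
  show "y \<le> Sup (alpha_set e x a s)" if "y \<in> alpha_set e x a s" for y
    using that bdd by (rule cSup_upper)
  show "Sup (alpha_set e x a s) \<le> u" if "\<forall>y\<in>alpha_set e x a s. y \<le> u" for u
    using ne that by (simp add: cSup_least)
next
  have shifted: "- of_real s + Sup (alpha_set e x a s) = - of_real t + Sup (alpha_set e x a t)"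
    if "0 \<le> a + of_real s" "s \<le> t" for s t
    using Sup_alpha_set_add[OF assms that(1), of "t - s"] that(2) by (simp add: algebra_simps)
  fix s t :: real assume as: "0 \<le> a + of_real s" and at: "0 \<le> a + of_real t"
  show "- of_real s + Sup (alpha_set e x a s) = - of_real t + Sup (alpha_set e x a t)"
  proof (cases "s \<le> t")
    case True
    with as show ?thesis by (rule shifted)
  next
    case False
    with at have "- of_real t + Sup (alpha_set e x a t) = - of_real s + Sup (alpha_set e x a s)"
      by (intro shifted) simp_all
    thus ?thesis by (rule sym)
  qed
qed

end
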